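(* Let $0\le k\le n$. There are exactly $k(n-k)+1$ isomorphism classes of cuspidal matroids of rank $k$ on $n$ elements, and the Tutte polynomials of representatives of these classes are linearly independent in $\mathbb{Z}[x,y]$.
   Context: $\mathsf{U}_{r,m}$ is the uniform matroid of rank $r$ on $m$ elements. A matroid is elementary split if it has no minor isomorphic to $\mathsf{U}_{0,1}\oplus\mathsf{U}_{1,2}\oplus\mathsf{U}_{1,1}$; it is Schubert (nested) if its lattice of cyclic flats is a chain; it is cuspidal if it is both Schubert and elementary split. Every cuspidal matroid of rank $k$ on $n$ elements is isomorphic to some $\mathsf{\Lambda}_{r,k,h,n}$ with $0\le r\le h$ and $0<k-r\le n-h$, the matroid on $[n]$ whose bases are the $k$-subsets $B$ with $|B\cap\{1,\dots,h\}|\ge r$. *)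

theory Defs
  imports Main "HOL-Computational_Algebra.Polynomial"
begin

definition matroid :: "'a set \<Rightarrow> 'a set set \<Rightarrow> bool" where
  "matroid E I \<longleftrightarrow> finite E \<and> (\<forall>X\<in>I. X \<subseteq> E) \<and> {} \<in> I
     \<and> (\<forall>X Y. X \<in> I \<longrightarrow> Y \<subseteq> X \<longrightarrow> Y \<in> I)
     \<and> (\<forall>X\<in>I. \<forall>Y\<in>I. card X < card Y \<longrightarrow> (\<exists>e\<in>Y - X. insert e X \<in> I))"

definition mrank :: "'a set set \<Rightarrow> 'a set \<Rightarrow> nat" where
  "mrank I A = Max (card ` {X. X \<in> I \<and> X \<subseteq> A})"

definition circuit :: "'a set \<Rightarrow> 'a set set \<Rightarrow> 'a set \<Rightarrow> bool" where
  "circuit E I C \<longleftrightarrow> C \<subseteq> E \<and> C \<notin> I \<and> (\<forall>D. D \<subset> C \<longrightarrow> D \<in> I)"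

definition flat :: "'a set \<Rightarrow> 'a set set \<Rightarrow> 'a set \<Rightarrow> bool" where
  "flat E I F \<longleftrightarrow> F \<subseteq> E \<and> (\<forall>e\<in>E - F. mrank I (insert e F) > mrank I F)"

definition cyclic :: "'a set \<Rightarrow> 'a set set \<Rightarrow> 'a set \<Rightarrow> bool" where
  "cyclic E I F \<longleftrightarrow> F = \<Union>{C. circuit E I C \<and> C \<subseteq> F}"

definition cyclic_flat :: "'a set \<Rightarrow> 'a set set \<Rightarrow> 'a set \<Rightarrow> bool" where
  "cyclic_flat E I F \<longleftrightarrow> flat E I F \<and> cyclic E I F"

definition schubert :: "'a set \<Rightarrow> 'a set set \<Rightarrow> bool" where
  "schubert E I \<longleftrightarrow> (\<forall>F G. cyclic_flat E I F \<longrightarrow> cyclic_flat E I G \<longrightarrow> F \<subseteq> G \<or> G \<subseteq> F)"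

text \<open>The minor (M / C) \ D for disjoint C, D: ground set E - (C \<union> D).\<close>
definition minor_indep :: "'a set \<Rightarrow> 'a set set \<Rightarrow> 'a set \<Rightarrow> 'a set \<Rightarrow> 'a set set" where
  "minor_indep E I C D = {X. X \<subseteq> E - (C \<union> D) \<and> mrank I (X \<union> C) = card X + mrank I C}"

definition miso :: "'a set \<Rightarrow> 'a set set \<Rightarrow> 'b set \<Rightarrow> 'b set set \<Rightarrow> bool" where
  "miso E1 I1 E2 I2 \<longleftrightarrow> (\<exists>f. bij_betw f E1 E2 \<and> (\<forall>X. X \<subseteq> E1 \<longrightarrow> (X \<in> I1 \<longleftrightarrow> f ` X \<in> I2)))"

definition unif_ground :: "nat \<Rightarrow> nat set" where
  "unif_ground m = {0..<m}"

definition unif_indep :: "nat \<Rightarrow> nat \<Rightarrow> nat set set" where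
  "unif_indep r m = {X. X \<subseteq> {0..<m} \<and> card X \<le> r}"

definition dsum_ground :: "'a set \<Rightarrow> 'b set \<Rightarrow> ('a + 'b) set" where
  "dsum_ground E1 E2 = Inl ` E1 \<union> Inr ` E2"

definition dsum_indep :: "'a set set \<Rightarrow> 'b set set \<Rightarrow> ('a + 'b) set set" where
  "dsum_indep I1 I2 = {X. Inl -` X \<in> I1 \<and> Inr -` X \<in> I2}"

definition forb_ground :: "(nat + (nat + nat)) set" where
  "forb_ground = dsum_ground (unif_ground 1) (dsum_ground (unif_ground 2) (unif_ground 1))"

definition forb_indep :: "(nat + (nat + nat)) set set" where
  "forb_indep = dsum_indep (unif_indep 0 1) (dsum_indep (unif_indep 1 2) (unif_indep 1 1))"

definition elementary_split :: "'a set \<Rightarrow> 'a set set \<Rightarrow> bool" where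
  "elementary_split E I \<longleftrightarrow>
     \<not> (\<exists>C D. C \<subseteq> E \<and> D \<subseteq> E \<and> C \<inter> D = {} \<and>
           miso (E - (C \<union> D)) (minor_indep E I C D) forb_ground forb_indep)"

definition cuspidal :: "'a set \<Rightarrow> 'a set set \<Rightarrow> bool" where
  "cuspidal E I \<longleftrightarrow> schubert E I \<and> elementary_split E I"

definition cusp_set :: "nat \<Rightarrow> nat \<Rightarrow> nat set set set" where
  "cusp_set k n = {I. matroid {0..<n} I \<and> mrank I {0..<n} = k \<and> cuspidal {0..<n} I}"

definition iso_rel :: "nat \<Rightarrow> nat \<Rightarrow> (nat set set \<times> nat set set) set" where
  "iso_rel k n = {(I, J). I \<in> cusp_set k n \<and> J \<in> cusp_set k n \<and> miso {0..<n} I {0..<n} J}"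

section \<open>Tutte polynomial in Z[x,y], represented as int poly poly (inner variable x, outer y)\<close>

definition varX :: "int poly poly" where "varX = [:[:0, 1:]:]"
definition varY :: "int poly poly" where "varY = [:0, 1:]"

definition tutte :: "'a set \<Rightarrow> 'a set set \<Rightarrow> int poly poly" where
  "tutte E I = (\<Sum>A\<in>Pow E. (varX - 1) ^ (mrank I E - mrank I A) * (varY - 1) ^ (card A - mrank I A))"

end

theory Submission
  imports Defs "HOL-Library.Product_Lexorder"
begin

text \<open>A cuspidal matroid of rank \<open>k\<close> has at most one nonempty cyclic flat \<open>T\<close> of rank
  below \<open>k\<close>: two nested ones \<open>T \<subset> Z\<close> yield the forbidden minor, with a loop taken from \<open>T\<close>,
  a parallel pair from \<open>Z\<close> and a coloop from outside \<open>Z\<close>. Every circuit with at most \<open>k\<close>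
  elements has closure \<open>T\<close>, so the independent sets are exactly the \<open>X\<close> with \<open>|X| \<le> k\<close> and
  \<open>|X \<inter> T| \<le> rk T\<close>. Conversely each such matroid is cuspidal, and after relabelling
  \<open>T = {0..<b}\<close> they are indexed by \<open>(0, 0)\<close> and the pairs \<open>a < k\<close>, \<open>a < b \<le> a + n - k\<close>,
  \<open>k (n - k) + 1\<close> in all.

  Substituting \<open>x + 1, y + 1\<close> turns the Tutte polynomial into the corank-nullity polynomial. For
  parameters \<open>(a, b)\<close> its coefficient of \<open>x^(k - a) y^(b - a)\<close> is positive (the set
  \<open>{0..<b}\<close> contributes), while it vanishes for all parameters that come later in a suitable
  order. So the Tutte polynomials of the representatives are linearly independent, and in
  particular the representatives are pairwise non-isomorphic.\<close>

section \<open>Rank, bases and closure\<close>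

locale fin_matroid =
  fixes E :: "'a set" and I :: "'a set set"
  assumes matroid: "matroid E I"
begin

abbreviation rk :: "'a set \<Rightarrow> nat" where
  "rk \<equiv> mrank I"

lemma finite_ground: "finite E"
  and indep_subset_ground: "X \<in> I \<Longrightarrow> X \<subseteq> E"
  and empty_indep: "{} \<in> I"
  and indep_subset: "X \<in> I \<Longrightarrow> Y \<subseteq> X \<Longrightarrow> Y \<in> I"
  and indep_augment: "X \<in> I \<Longrightarrow> Y \<in> I \<Longrightarrow> card X < card Y \<Longrightarrow> \<exists>e\<in>Y - X. insert e X \<in> I"
  using matroid unfolding matroid_def by blast+

lemma finite_subset_ground: "A \<subseteq> E \<Longrightarrow> finite A"
  using finite_ground finite_subset by blast

lemma finite_indep: "X \<in> I \<Longrightarrow> finite X"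
  using indep_subset_ground finite_subset_ground by blast

definition basis :: "'a set \<Rightarrow> 'a set \<Rightarrow> bool" where
  "basis A B \<longleftrightarrow> B \<in> I \<and> B \<subseteq> A \<and> card B = rk A"

lemma finite_indep_subsets: "finite {X. X \<in> I \<and> X \<subseteq> A}"
proof -
  have "{X. X \<in> I \<and> X \<subseteq> A} \<subseteq> Pow E" using indep_subset_ground by blast
  then show ?thesis using finite_ground by (simp add: finite_subset)
qed

lemma card_le_rank: "X \<in> I \<Longrightarrow> X \<subseteq> A \<Longrightarrow> card X \<le> rk A"
  unfolding mrank_def using finite_indep_subsets by (intro Max_ge) auto

lemma ex_basis: "\<exists>B. basis A B"
proof -
  have "rk A \<in> card ` {X. X \<in> I \<and> X \<subseteq> A}"
    unfolding mrank_def using finite_indep_subsets empty_indep by (intro Max_in) auto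
  then show ?thesis unfolding basis_def by auto
qed

lemma rank_le_card: "finite A \<Longrightarrow> rk A \<le> card A"
proof -
  assume "finite A"
  obtain B where "basis A B" using ex_basis by blast
  then show ?thesis using card_mono[OF \<open>finite A\<close>, of B] unfolding basis_def by simp
qed

lemma rank_mono: "A \<subseteq> B \<Longrightarrow> rk A \<le> rk B"
proof -
  assume "A \<subseteq> B"
  obtain X where X: "X \<in> I" "X \<subseteq> A" "card X = rk A" using ex_basis unfolding basis_def by blast
  then show ?thesis using card_le_rank[of X B] \<open>A \<subseteq> B\<close> by simp
qed

lemma rank_le_rank_ground: "rk A \<le> rk E"
proof -
  obtain X where X: "X \<in> I" "X \<subseteq> A" "card X = rk A" using ex_basis unfolding basis_def by blast
  then show ?thesis using card_le_rank[of X E] indep_subset_ground[of X] by simp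
qed

lemma rank_indep: "X \<in> I \<Longrightarrow> rk X = card X"
  using card_le_rank[of X X] rank_le_card finite_indep by (simp add: antisym)

lemma indep_iff_rank:
  assumes "A \<subseteq> E"
  shows "A \<in> I \<longleftrightarrow> rk A = card A"
proof
  assume "rk A = card A"
  moreover obtain B where "basis A B" using ex_basis by blast
  ultimately have "B = A" using card_subset_eq[OF finite_subset_ground[OF assms], of B]
    unfolding basis_def by simp
  then show "A \<in> I" using \<open>basis A B\<close> unfolding basis_def by blast
qed (rule rank_indep)

lemma rank_less_card_if_dep: "A \<subseteq> E \<Longrightarrow> A \<notin> I \<Longrightarrow> rk A < card A"
  using indep_iff_rank[of A] rank_le_card[OF finite_subset_ground, of A] by linarith

lemma basis_extend:
  assumes "X \<in> I" "X \<subseteq> A"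
  shows "\<exists>B. basis A B \<and> X \<subseteq> B"
  using assms
proof (induction "rk A - card X" arbitrary: X)
  case 0
  then have "card X = rk A" using card_le_rank[of X A] by simp
  then show ?case using "0.prems" unfolding basis_def by blast
next
  case (Suc d X)
  obtain Z where Z: "basis A Z" using ex_basis by blast
  then have "card X < card Z" using Suc.hyps(2) unfolding basis_def by linarith
  then obtain e where e: "e \<in> Z - X" "insert e X \<in> I"
    using indep_augment Suc.prems Z unfolding basis_def by blast
  have "card (insert e X) = Suc (card X)" using e finite_indep Suc.prems by auto
  then have "d = rk A - card (insert e X)" using Suc.hyps(2) by linarith
  moreover have "insert e X \<subseteq> A" using e Suc.prems Z unfolding basis_def by blast
  ultimately show ?case using Suc.hyps(1) e by blast
qed

lemma rank_submodular: "rk (A \<union> B) + rk (A \<inter> B) \<le> rk A + rk B"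
proof -
  obtain J where J: "basis (A \<inter> B) J" using ex_basis by blast
  then obtain JA where JA: "basis A JA" "J \<subseteq> JA"
    using basis_extend[of J A] unfolding basis_def by blast
  then obtain JU where JU: "basis (A \<union> B) JU" "JA \<subseteq> JU"
    using basis_extend[of JA "A \<union> B"] unfolding basis_def by blast
  have ind: "J \<in> I" "JA \<in> I" "JU \<in> I" using J JA JU unfolding basis_def by blast+
  have fin: "finite J" "finite JA" "finite JU" using ind by (simp_all add: finite_indep)
  have "card (JU \<inter> A) \<le> card JA"
    using card_le_rank[of "JU \<inter> A" A] indep_subset[OF ind(3)] JA unfolding basis_def by auto
  then have JUA: "JU \<inter> A = JA"
    using JA JU fin card_seteq[of "JU \<inter> A" JA] unfolding basis_def by auto
  have "card (JA \<inter> B) \<le> card J"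
    using card_le_rank[of "JA \<inter> B" "A \<inter> B"] indep_subset[OF ind(2)] J JA unfolding basis_def by auto
  then have JAB: "JA \<inter> B = J"
    using J JA fin card_seteq[of "JA \<inter> B" J] unfolding basis_def by auto
  have "card J + card (JU - JA) = card (J \<union> (JU - JA))"
    using fin JA by (intro card_Un_disjoint[symmetric]) auto
  also have "\<dots> \<le> card (JU \<inter> B)"
    using JU JUA JAB fin unfolding basis_def by (intro card_mono) auto
  also have "\<dots> \<le> rk B" by (rule card_le_rank[OF indep_subset[OF ind(3)]]) auto
  finally show ?thesis using J JA JU fin card_mono[OF fin(3) JU(2)]
    unfolding basis_def by (simp add: card_Diff_subset)
qed

lemma rank_union_le: "finite B \<Longrightarrow> rk (A \<union> B) \<le> rk A + card B"
  using rank_submodular[of A B] rank_le_card[of B] by linarith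

lemma rank_insert_eq_mono:
  assumes "rk (insert x A) = rk A" "A \<subseteq> B"
  shows "rk (insert x B) = rk B"
proof -
  have "rk (B \<union> insert x A) + rk (B \<inter> insert x A) \<le> rk B + rk (insert x A)"
    by (rule rank_submodular)
  moreover have "B \<union> insert x A = insert x B" using assms by blast
  moreover have "rk A \<le> rk (B \<inter> insert x A)" using assms by (intro rank_mono) blast
  ultimately have "rk (insert x B) \<le> rk B" using assms(1) by simp
  then show ?thesis using rank_mono by (meson antisym subset_insertI)
qed

lemma rank_union_eq_if_insert_eq:
  assumes "finite S" "\<forall>x\<in>S. rk (insert x A) = rk A"
  shows "rk (A \<union> S) = rk A"
  using assms
proof (induction S rule: finite_induct)
  case (insert s S)
  have "rk (insert s A) = rk A" using insert.prems by simp
  then have "rk (insert s (A \<union> S)) = rk (A \<union> S)" by (rule rank_insert_eq_mono) blast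
  then show ?case using insert by simp
qed simp

lemma indep_insert_if_rank_increases:
  assumes B: "basis Z B" and c: "rk Z < rk (insert c Z)" "c \<in> E"
  shows "insert c B \<in> I"
proof (rule ccontr)
  assume dep: "insert c B \<notin> I"
  have BI: "B \<in> I" "B \<subseteq> Z" using B unfolding basis_def by auto
  have "c \<notin> Z" using c(1) by (auto simp: insert_absorb)
  then have "c \<notin> B" using BI by blast
  have "insert c B \<subseteq> E" using BI(1) c(2) indep_subset_ground by blast
  then have "rk (insert c B) < card (insert c B)" using rank_less_card_if_dep dep by blast
  also have "\<dots> = Suc (rk B)" using \<open>c \<notin> B\<close> finite_indep[OF BI(1)] rank_indep[OF BI(1)] by simp
  finally have "rk (insert c B) = rk B" using rank_mono[of B "insert c B"]
    by (simp add: subset_insertI)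
  then have "rk (insert c Z) = rk Z" using rank_insert_eq_mono BI(2) by blast
  then show False using c(1) by simp
qed

definition cl :: "'a set \<Rightarrow> 'a set" where
  "cl A = {x \<in> E. rk (insert x A) = rk A}"

lemma cl_subset_ground: "cl A \<subseteq> E"
  unfolding cl_def by blast

lemma subset_cl: "A \<subseteq> E \<Longrightarrow> A \<subseteq> cl A"
  unfolding cl_def by (auto simp: insert_absorb)

lemma rank_cl:
  assumes "A \<subseteq> E"
  shows "rk (cl A) = rk A"
proof -
  have "rk (A \<union> cl A) = rk A"
    using finite_subset_ground[OF cl_subset_ground]
    by (rule rank_union_eq_if_insert_eq) (simp add: cl_def)
  moreover have "A \<union> cl A = cl A" using subset_cl[OF assms] by blast
  ultimately show ?thesis by simp
qed

lemma flat_cl: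
  assumes "A \<subseteq> E"
  shows "flat E I (cl A)"
  unfolding flat_def
proof (intro conjI ballI cl_subset_ground)
  fix e assume e: "e \<in> E - cl A"
  have "rk A \<le> rk (insert e A)" by (rule rank_mono) blast
  moreover have "rk (insert e A) \<le> rk (insert e (cl A))"
    using subset_cl[OF assms] by (intro rank_mono) blast
  moreover have "rk (insert e A) \<noteq> rk A" using e unfolding cl_def by blast
  ultimately show "rk (cl A) < rk (insert e (cl A))" using rank_cl[OF assms] by linarith
qed

lemma flat_rank_insert_less: "flat E I F \<Longrightarrow> e \<in> E \<Longrightarrow> e \<notin> F \<Longrightarrow> rk F < rk (insert e F)"
  unfolding flat_def by blast

lemma flat_eq_ground_if_rank:
  assumes "flat E I F" "rk F = rk E"
  shows "F = E"
proof (rule ccontr)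
  assume "F \<noteq> E"
  then obtain e where "e \<in> E" "e \<notin> F" using assms unfolding flat_def by blast
  then have "rk F < rk (insert e F)" using flat_rank_insert_less assms(1) by blast
  then show False using rank_le_rank_ground[of "insert e F"] assms(2) by linarith
qed

lemma circuit_subset_ground: "circuit E I C \<Longrightarrow> C \<subseteq> E"
  unfolding circuit_def by blast

lemma circuit_dep: "circuit E I C \<Longrightarrow> C \<notin> I"
  unfolding circuit_def by blast

lemma circuit_nonempty: "circuit E I C \<Longrightarrow> C \<noteq> {}"
  unfolding circuit_def using empty_indep by blast

lemma finite_circuit: "circuit E I C \<Longrightarrow> finite C"
  by (rule finite_subset_ground[OF circuit_subset_ground])

lemma card_circuit_pos: "circuit E I C \<Longrightarrow> 0 < card C"
  using circuit_nonempty finite_circuit by (simp add: card_gt_0_iff)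

lemma circuit_remove_indep: "circuit E I C \<Longrightarrow> x \<in> C \<Longrightarrow> C - {x} \<in> I"
  unfolding circuit_def by blast

lemma rank_circuit:
  assumes "circuit E I C"
  shows "rk C = card C - 1"
proof -
  obtain x where x: "x \<in> C" using circuit_nonempty assms by blast
  have "rk (C - {x}) = card C - 1"
    using rank_indep[OF circuit_remove_indep[OF assms x]] finite_circuit[OF assms] x by simp
  moreover have "rk (C - {x}) \<le> rk C" by (rule rank_mono) blast
  moreover have "rk C < card C"
    using rank_less_card_if_dep circuit_subset_ground circuit_dep assms by blast
  ultimately show ?thesis by linarith
qed

lemma dep_contains_circuit:
  assumes "X \<subseteq> E" "X \<notin> I"
  shows "\<exists>C\<subseteq>X. circuit E I C"
proof -
  define S where "S = {C. C \<subseteq> X \<and> C \<notin> I}"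
  have "X \<in> S" using assms unfolding S_def by blast
  then obtain C where C: "C \<in> S" "\<forall>D\<in>S. card C \<le> card D"
    using ex_has_least_nat[of "\<lambda>C. C \<in> S" X card] by blast
  have C': "C \<subseteq> X" "C \<notin> I" using C(1) unfolding S_def by auto
  have "D \<in> I" if "D \<subset> C" for D
  proof -
    have "finite C" using C assms finite_subset_ground unfolding S_def by blast
    then have "card D < card C" using that by (simp add: psubset_card_mono)
    then have "D \<notin> S" using C(2) by (meson not_le)
    then show ?thesis using C that unfolding S_def by blast
  qed
  then have "circuit E I C" using C' assms(1) unfolding circuit_def by blast
  then show ?thesis using C'(1) by blast
qed

lemma cyclic_ex_circuit: "cyclic E I F \<Longrightarrow> x \<in> F \<Longrightarrow> \<exists>C. circuit E I C \<and> C \<subseteq> F \<and> x \<in> C"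
  unfolding cyclic_def by blast

lemma cyclic_nonempty_dep:
  assumes "cyclic E I F" "F \<noteq> {}"
  shows "F \<notin> I"
proof
  assume "F \<in> I"
  obtain x where "x \<in> F" using assms(2) by blast
  then obtain C where "circuit E I C" "C \<subseteq> F" using cyclic_ex_circuit assms(1) by blast
  then show False using indep_subset[OF \<open>F \<in> I\<close>] circuit_dep by blast
qed

lemma rank_remove_cyclic:
  assumes "cyclic E I Z" "p \<in> Z"
  shows "rk (Z - {p}) = rk Z"
proof -
  obtain C where C: "circuit E I C" "C \<subseteq> Z" "p \<in> C" using cyclic_ex_circuit assms by blast
  have "rk (insert p (C - {p})) = rk (C - {p})"
    using rank_circuit[OF C(1)] rank_indep[OF circuit_remove_indep[OF C(1) C(3)]]
      finite_circuit[OF C(1)] C(3)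
    by (simp add: insert_absorb)
  then have "rk (insert p (Z - {p})) = rk (Z - {p})" by (rule rank_insert_eq_mono) (use C in blast)
  then show ?thesis using assms(2) by (simp add: insert_absorb)
qed

lemma cyclic_cl_circuit:
  assumes C: "circuit E I C"
  shows "cyclic E I (cl C)"
  unfolding cyclic_def
proof (intro equalityI subsetI)
  fix e assume e: "e \<in> cl C"
  have CE: "C \<subseteq> E" using circuit_subset_ground C by blast
  show "e \<in> \<Union>{D. circuit E I D \<and> D \<subseteq> cl C}"
  proof (cases "e \<in> C")
    case True
    then show ?thesis using C subset_cl[OF CE] by blast
  next
    case False
    obtain x where x: "x \<in> C" using circuit_nonempty C by blast
    let ?B = "C - {x}"
    have BI: "?B \<in> I" using circuit_remove_indep C x by blast
    have "rk (insert e ?B) \<le> rk (insert e C)" by (rule rank_mono) blast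
    also have "\<dots> = card C - 1" using e rank_circuit[OF C] unfolding cl_def by simp
    finally have "rk (insert e ?B) < card (insert e ?B)"
      using False x finite_circuit[OF C] card_circuit_pos[OF C] by simp
    then have "insert e ?B \<notin> I" using rank_indep[of "insert e ?B"] by auto
    moreover have "insert e ?B \<subseteq> E" using CE e cl_subset_ground by blast
    ultimately obtain D where D: "D \<subseteq> insert e ?B" "circuit E I D"
      using dep_contains_circuit[of "insert e ?B"] by auto
    have "e \<in> D"
    proof (rule ccontr)
      assume "e \<notin> D"
      then have "D \<in> I" using D(1) BI indep_subset by blast
      then show False using circuit_dep D(2) by blast
    qed
    moreover have "D \<subseteq> cl C" using D e subset_cl[OF CE] by blast
    ultimately show ?thesis using D by blast
  qed
qed blast

lemma cyclic_flat_cl_circuit: "circuit E I C \<Longrightarrow> cyclic_flat E I (cl C)"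
  unfolding cyclic_flat_def using cyclic_cl_circuit flat_cl circuit_subset_ground by blast

end

section \<open>The forbidden minor\<close>

lemma forb_ground_eq: "forb_ground = {Inl 0, Inr (Inl 0), Inr (Inl 1), Inr (Inr 0)}"
  by (auto simp: forb_ground_def dsum_ground_def unif_ground_def)

lemma subset_forb_ground_iff:
  "Z \<subseteq> forb_ground \<longleftrightarrow> Inl -` Z \<subseteq> {0} \<and> Inl -` Inr -` Z \<subseteq> {0, 1} \<and> Inr -` Inr -` Z \<subseteq> {0}"
proof -
  have mem: "z \<in> forb_ground \<longleftrightarrow> (\<forall>x. z = Inl x \<longrightarrow> x = 0) \<and> (\<forall>y. z = Inr (Inl y) \<longrightarrow> y \<in> {0, 1})
      \<and> (\<forall>w. z = Inr (Inr w) \<longrightarrow> w = 0)" for z :: "nat + (nat + nat)"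
  proof (cases z)
    case (Inr y)
    then show ?thesis unfolding forb_ground_eq by (cases y) auto
  qed (auto simp: forb_ground_eq)
  show ?thesis unfolding subset_iff mem by auto
qed

lemma forb_indep_iff:
  "Z \<in> forb_indep \<longleftrightarrow> Z \<subseteq> forb_ground \<and> Inl 0 \<notin> Z \<and> \<not> (Inr (Inl 0) \<in> Z \<and> Inr (Inl 1) \<in> Z)"
proof -
  have unif0: "X \<in> unif_indep 0 m \<longleftrightarrow> X = {}" for X :: "nat set" and m
    using finite_subset[of X "{0..<m}"] by (auto simp: unif_indep_def)
  have unif1: "X \<in> unif_indep 1 m \<longleftrightarrow> X \<subseteq> {0..<m} \<and> (\<forall>x\<in>X. \<forall>y\<in>X. x = y)" for X :: "nat set" and m
    using finite_subset[of X "{0..<m}"] card_le_Suc0_iff_eq[of X] by (auto simp: unif_indep_def)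
  show ?thesis
    unfolding subset_forb_ground_iff forb_indep_def dsum_indep_def unif0 unif1
    by (auto simp: subset_iff) (metis vimage_eq Zero_not_Suc)+
qed

lemma forb_minor_rank_conditions:
  assumes "miso (E - (C \<union> D)) (minor_indep E I C D) forb_ground forb_indep"
  obtains l p1 p2 c where "{l, p1, p2, c} \<subseteq> E - C" "distinct [l, p1, p2, c]"
    "mrank I (insert l C) \<noteq> mrank I C + 1"
    "mrank I (insert p2 C) = mrank I C + 1"
    "mrank I (insert p1 (insert c C)) = mrank I C + 2"
    "mrank I (insert p1 (insert p2 C)) \<noteq> mrank I C + 2"
proof -
  define S where "S = E - (C \<union> D)"
  obtain f where bij: "bij_betw f S forb_ground"
    and iso: "\<And>X. X \<subseteq> S \<Longrightarrow> X \<in> minor_indep E I C D \<longleftrightarrow> f ` X \<in> forb_indep"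
    using assms unfolding miso_def S_def by blast
  define g where "g = inv_into S f"
  have g: "g y \<in> S" "f (g y) = y" if "y \<in> forb_ground" for y
    using that bij unfolding g_def bij_betw_def by (auto simp: inv_into_into f_inv_into_f)
  define l p1 p2 c where "l = g (Inl 0)" and "p1 = g (Inr (Inl 0))" and "p2 = g (Inr (Inl 1))"
    and "c = g (Inr (Inr 0))"
  have S: "{l, p1, p2, c} \<subseteq> S"
    and f: "f l = Inl 0" "f p1 = Inr (Inl 0)" "f p2 = Inr (Inl 1)" "f c = Inr (Inr 0)"
    unfolding l_def p1_def p2_def c_def using g by (simp_all add: forb_ground_eq)
  have "distinct (map f [l, p1, p2, c])" using f by simp
  then have dist: "distinct [l, p1, p2, c]" by (simp only: distinct_map)
  have indep: "X \<in> minor_indep E I C D \<longleftrightarrow> mrank I (X \<union> C) = card X + mrank I C" if "X \<subseteq> S" for X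
    using that unfolding minor_indep_def S_def by blast
  have "{l} \<notin> minor_indep E I C D" "{p2} \<in> minor_indep E I C D"
    "{p1, c} \<in> minor_indep E I C D" "{p1, p2} \<notin> minor_indep E I C D"
    using iso[of "{l}"] iso[of "{p2}"] iso[of "{p1, c}"] iso[of "{p1, p2}"] S f
    by (auto simp: forb_indep_iff forb_ground_eq)
  then show ?thesis
    using that[of l p1 p2 c] indep[of "{l}"] indep[of "{p2}"] indep[of "{p1, c}"] indep[of "{p1, p2}"]
      S dist
    unfolding S_def by auto
qed

definition forb_label :: "'a \<Rightarrow> 'a \<Rightarrow> 'a \<Rightarrow> 'a \<Rightarrow> nat + (nat + nat)" where
  "forb_label l p1 p2 x = (if x = l then Inl 0 else if x = p1 then Inr (Inl 0)
    else if x = p2 then Inr (Inl 1) else Inr (Inr 0))"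

lemma bij_betw_forb_label:
  assumes "distinct [l, p1, p2, c]"
  shows "bij_betw (forb_label l p1 p2) {l, p1, p2, c} forb_ground"
  using assms unfolding bij_betw_def inj_on_def forb_ground_eq by (auto simp: forb_label_def)

lemma forb_label_image_indep_iff:
  assumes dist: "distinct [l, p1, p2, c]" and X: "X \<subseteq> {l, p1, p2, c}"
  shows "forb_label l p1 p2 ` X \<in> forb_indep \<longleftrightarrow> l \<notin> X \<and> \<not> (p1 \<in> X \<and> p2 \<in> X)"
proof -
  let ?f = "forb_label l p1 p2"
  have bij: "bij_betw ?f {l, p1, p2, c} forb_ground" using bij_betw_forb_label[OF dist] .
  have inj: "inj_on ?f {l, p1, p2, c}" using bij by (rule bij_betw_imp_inj_on)
  have f: "?f l = Inl 0" "?f p1 = Inr (Inl 0)" "?f p2 = Inr (Inl 1)"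
    using dist by (auto simp: forb_label_def)
  have "?f ` X \<subseteq> forb_ground" using bij X bij_betw_imp_surj_on by blast
  moreover have "Inl 0 \<in> ?f ` X \<longleftrightarrow> l \<in> X" "Inr (Inl 0) \<in> ?f ` X \<longleftrightarrow> p1 \<in> X"
    "Inr (Inl 1) \<in> ?f ` X \<longleftrightarrow> p2 \<in> X"
    using inj_on_image_mem_iff[OF inj _ X, of l] inj_on_image_mem_iff[OF inj _ X, of p1]
      inj_on_image_mem_iff[OF inj _ X, of p2] f by simp_all
  ultimately show ?thesis by (simp add: forb_indep_iff)
qed

context fin_matroid
begin

lemma rank_empty: "rk {} = 0"
  using rank_le_card[of "{}"] by simp

lemma basis_insert_dep: "basis A B \<Longrightarrow> x \<in> A \<Longrightarrow> x \<notin> B \<Longrightarrow> insert x B \<notin> I"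
  using card_le_rank[of "insert x B" A] finite_indep unfolding basis_def by fastforce

lemma minor_indep_iff_Un_indep:
  assumes Y: "Y \<in> I" and X: "X \<subseteq> E - (Y \<union> D)"
  shows "X \<in> minor_indep E I Y D \<longleftrightarrow> X \<union> Y \<in> I"
proof -
  have "card (X \<union> Y) = card X + card Y"
    using X finite_indep[OF Y] finite_subset_ground[of X] by (intro card_Un_disjoint) auto
  then have "X \<in> minor_indep E I Y D \<longleftrightarrow> rk (X \<union> Y) = card (X \<union> Y)"
    using X rank_indep[OF Y] unfolding minor_indep_def by auto
  also have "\<dots> \<longleftrightarrow> X \<union> Y \<in> I"
    using indep_iff_rank[of "X \<union> Y"] X indep_subset_ground[OF Y] by auto
  finally show ?thesis .
qed

text \<open>Contracting \<open>Y\<close> and deleting everything outside \<open>{l, p1, p2, c}\<close> leaves the loop \<open>l\<close>,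
  the parallel pair \<open>p1, p2\<close> and the coloop \<open>c\<close>.\<close>

lemma not_elementary_splitI:
  assumes Y: "Y \<in> I" and S: "{l, p1, p2, c} \<subseteq> E - Y" and dist: "distinct [l, p1, p2, c]"
    and loop: "insert l Y \<notin> I" and parallel: "insert p1 (insert p2 Y) \<notin> I"
    and indep1: "insert p1 (insert c Y) \<in> I" and indep2: "insert p2 (insert c Y) \<in> I"
  shows "\<not> elementary_split E I"
proof -
  define D where "D = E - Y - {l, p1, p2, c}"
  have SE: "E - (Y \<union> D) = {l, p1, p2, c}" using S unfolding D_def by blast
  have "X \<in> minor_indep E I Y D \<longleftrightarrow> forb_label l p1 p2 ` X \<in> forb_indep"
    if X: "X \<subseteq> {l, p1, p2, c}" for X
  proof -
    have "X \<in> minor_indep E I Y D \<longleftrightarrow> X \<union> Y \<in> I"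
      using minor_indep_iff_Un_indep Y X SE by blast
    also have "\<dots> \<longleftrightarrow> l \<notin> X \<and> \<not> (p1 \<in> X \<and> p2 \<in> X)"
    proof
      assume "X \<union> Y \<in> I"
      then show "l \<notin> X \<and> \<not> (p1 \<in> X \<and> p2 \<in> X)"
        using indep_subset loop parallel by (meson insert_subset sup_ge1 sup_ge2 subset_iff)
    next
      assume "l \<notin> X \<and> \<not> (p1 \<in> X \<and> p2 \<in> X)"
      then have "X \<union> Y \<subseteq> insert p1 (insert c Y) \<or> X \<union> Y \<subseteq> insert p2 (insert c Y)"
        using X by blast
      then show "X \<union> Y \<in> I" using indep_subset indep1 indep2 by blast
    qed
    finally show ?thesis using forb_label_image_indep_iff[OF dist X] by simp
  qed
  then have "miso (E - (Y \<union> D)) (minor_indep E I Y D) forb_ground forb_indep"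
    unfolding miso_def SE using bij_betw_forb_label[OF dist] by blast
  moreover have "Y \<subseteq> E" "D \<subseteq> E" "Y \<inter> D = {}" using indep_subset_ground[OF Y] unfolding D_def by auto
  ultimately show ?thesis unfolding elementary_split_def by blast
qed

section \<open>Cuspidal matroids are determined by one cyclic flat\<close>

lemma cyclic_basis_exchange:
  assumes Z: "cyclic E I Z" and B: "basis Z B" and p: "p \<in> B"
  obtains q where "q \<in> Z" "q \<notin> B" "basis Z (insert q (B - {p}))"
proof -
  define Y where "Y = B - {p}"
  have BI: "B \<in> I" "B \<subseteq> Z" "card B = rk Z" using B unfolding basis_def by auto
  have YI: "Y \<in> I" using indep_subset[OF BI(1)] unfolding Y_def by blast
  have "0 < card B" using p finite_indep[OF BI(1)] card_gt_0_iff by blast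
  then have card_Y: "Suc (card Y) = rk Z" using BI(3) p finite_indep[OF BI(1)] unfolding Y_def
    by simp
  have "Y \<subseteq> Z - {p}" using BI(2) unfolding Y_def by blast
  then obtain J where J: "basis (Z - {p}) J" "Y \<subseteq> J" using basis_extend[OF YI] by blast
  have "rk (Z - {p}) = rk Z" using rank_remove_cyclic[OF Z, of p] p BI(2) by blast
  then have J': "J \<in> I" "J \<subseteq> Z - {p}" "card J = rk Z" using J(1) unfolding basis_def by auto
  then have "\<not> J \<subseteq> Y" using card_Y card_mono[OF finite_indep[OF YI], of J] by auto
  then obtain q where q: "q \<in> J" "q \<notin> Y" by blast
  have "insert q Y \<in> I" using indep_subset[OF J'(1)] J(2) q(1) by blast
  moreover have "card (insert q Y) = rk Z" using card_Y q(2) finite_indep[OF YI] by simp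
  moreover have "insert q Y \<subseteq> Z" using J'(2) J(2) q(1) by blast
  ultimately have "basis Z (insert q Y)" unfolding basis_def by blast
  moreover have "q \<in> Z" "q \<notin> B" using J'(2) q unfolding Y_def by auto
  ultimately show ?thesis using that unfolding Y_def by blast
qed

lemma basis_extend_beyond_flat:
  assumes T: "flat E I T" "T \<subset> Z" "Z \<subseteq> E" and Y: "basis T Y"
  obtains B p where "basis Z B" "Y \<subseteq> B" "p \<in> B" "p \<notin> T"
proof -
  obtain B where B: "basis Z B" "Y \<subseteq> B"
    using basis_extend[of Y Z] Y T(2) unfolding basis_def by blast
  obtain z where z: "z \<in> Z" "z \<notin> T" using T(2) by blast
  then have "rk T < rk (insert z T)" using flat_rank_insert_less[OF T(1)] T(3) by blast
  also have "\<dots> \<le> rk Z" using z T(2) by (intro rank_mono) blast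
  finally have "card Y < card B" using Y B unfolding basis_def by simp
  then have "\<not> B \<subseteq> Y" using card_mono[OF finite_indep, of Y B] Y unfolding basis_def by auto
  then obtain p where p: "p \<in> B" "p \<notin> Y" by blast
  have "p \<notin> T"
    using basis_insert_dep[OF Y _ p(2)] indep_subset[of B "insert p Y"] p B unfolding basis_def
    by blast
  then show ?thesis using that B p(1) by blast
qed

text \<open>For a basis \<open>Y\<close> of \<open>T\<close> extended to a basis \<open>B\<close> of \<open>Z\<close>, the configuration of
  \<open>not_elementary_splitI\<close> is obtained by contracting \<open>B - {p1}\<close>, where \<open>l \<in> T - Y\<close>,
  \<open>p1 \<in> B - T\<close>, \<open>p2\<close> is exchanged for \<open>p1\<close> inside the cyclic set \<open>Z\<close>, and \<open>c \<notin> Z\<close>.\<close>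

lemma not_elementary_split_if_nested_cyclic_flats:
  assumes T: "cyclic_flat E I T" "T \<noteq> {}" and Z: "cyclic_flat E I Z" "T \<subset> Z" "rk Z < rk E"
  shows "\<not> elementary_split E I"
proof -
  have T': "flat E I T" "cyclic E I T" and Z': "flat E I Z" "cyclic E I Z" "Z \<subseteq> E"
    using T Z unfolding cyclic_flat_def flat_def by auto
  obtain Y where Y: "basis T Y" using ex_basis by blast
  have "T \<notin> I" using cyclic_nonempty_dep T'(2) T(2) by blast
  then have "\<not> T \<subseteq> Y" using Y unfolding basis_def by (metis subset_antisym)
  then obtain l where l: "l \<in> T" "l \<notin> Y" by blast
  have lY: "insert l Y \<notin> I" using basis_insert_dep Y l by blast
  obtain B p1 where B: "basis Z B" "Y \<subseteq> B" and p1: "p1 \<in> B" "p1 \<notin> T"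
    using basis_extend_beyond_flat[OF T'(1) Z(2) Z'(3) Y] by blast
  have BI: "B \<in> I" using B(1) unfolding basis_def by auto
  obtain p2 where p2B: "p2 \<in> Z" "p2 \<notin> B" and B2: "basis Z (insert p2 (B - {p1}))"
    using cyclic_basis_exchange[OF Z'(2) B(1) p1(1)] by blast
  define Y' where "Y' = B - {p1}"
  have Y'I: "Y' \<in> I" using indep_subset[OF BI(1)] unfolding Y'_def by blast
  have "insert l Y \<subseteq> insert l Y'" using B(2) p1(2) Y unfolding Y'_def basis_def by blast
  then have lY': "insert l Y' \<notin> I" using lY indep_subset by blast
  have Z_B: "B \<subseteq> Z" using B(1) unfolding basis_def by auto
  have B_eq: "insert p1 (insert x Y') = insert x B" for x using p1(1) unfolding Y'_def by blast
  have parallel: "insert p1 (insert p2 Y') \<notin> I" using basis_insert_dep[OF B(1) p2B] B_eq by simp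
  have "Z \<noteq> E" using Z(3) by auto
  then obtain c where c: "c \<in> E" "c \<notin> Z" using Z'(3) by blast
  then have rc: "rk Z < rk (insert c Z)" using flat_rank_insert_less[OF Z'(1)] by blast
  have indep1: "insert p1 (insert c Y') \<in> I"
    using indep_insert_if_rank_increases[OF B(1) rc c(1)] B_eq by simp
  have indep2: "insert p2 (insert c Y') \<in> I"
    using indep_insert_if_rank_increases[OF B2 rc c(1)] insert_commute[of c p2] unfolding Y'_def
    by simp
  have "l \<notin> B" using lY indep_subset[OF BI(1)] B(2) by blast
  moreover have "l \<noteq> p2" using lY' B2 unfolding basis_def Y'_def by blast
  moreover have "l \<in> Z" "p1 \<in> Z" "Y' \<subseteq> Z" using l(1) p1(1) Z(2) Z_B(1) unfolding Y'_def by auto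
  ultimately have "{l, p1, p2, c} \<subseteq> E - Y'" "distinct [l, p1, p2, c]"
    using l p1 p2B c Z'(3) unfolding Y'_def by auto
  then show ?thesis using not_elementary_splitI[OF Y'I _ _ lY' parallel indep1 indep2] by blast
qed

end

text \<open>Up to relabelling, the matroid \<open>\<Lambda>(r, k, h, n)\<close> of the paper is
  \<open>lambda_indep {0..<n} ({0..<n} - {0..<h}) k (k - r)\<close>.\<close>

definition lambda_indep :: "'a set \<Rightarrow> 'a set \<Rightarrow> nat \<Rightarrow> nat \<Rightarrow> 'a set set" where
  "lambda_indep E T k a = {X. X \<subseteq> E \<and> card X \<le> k \<and> card (X \<inter> T) \<le> a}"

context fin_matroid
begin

lemma cuspidal_cyclic_flat_unique:
  assumes cusp: "cuspidal E I"
    and F: "cyclic_flat E I F" "F \<noteq> {}" "rk F < rk E"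
    and G: "cyclic_flat E I G" "G \<noteq> {}" "rk G < rk E"
  shows "F = G"
proof -
  have "F \<subseteq> G \<or> G \<subseteq> F" using cusp F G unfolding cuspidal_def schubert_def by blast
  moreover have "elementary_split E I" using cusp unfolding cuspidal_def by blast
  ultimately show ?thesis
    using not_elementary_split_if_nested_cyclic_flats F G by blast
qed

lemma cyclic_flat_cl_small_circuit:
  assumes C: "circuit E I C" and "card C \<le> rk E"
  shows "cyclic_flat E I (cl C)" "cl C \<noteq> {}" "rk (cl C) < rk E"
proof -
  have CE: "C \<subseteq> E" by (rule circuit_subset_ground[OF C])
  show "cyclic_flat E I (cl C)" by (rule cyclic_flat_cl_circuit[OF C])
  show "cl C \<noteq> {}" using circuit_nonempty[OF C] subset_cl[OF CE] by blast
  show "rk (cl C) < rk E"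
    using rank_cl[OF CE] rank_circuit[OF C] card_circuit_pos[OF C] assms(2) by linarith
qed

lemma indep_eq_lambda_if_small_circuits:
  assumes "T \<subseteq> E" and small: "\<And>C. circuit E I C \<Longrightarrow> card C \<le> rk E \<Longrightarrow> C \<subseteq> T \<and> rk T \<le> rk C"
  shows "I = lambda_indep E T (rk E) (rk T)"
proof (intro equalityI subsetI)
  fix X assume X: "X \<in> I"
  then show "X \<in> lambda_indep E T (rk E) (rk T)"
    using indep_subset_ground card_le_rank indep_subset[OF X, of "X \<inter> T"]
    unfolding lambda_indep_def by blast
next
  fix X assume X: "X \<in> lambda_indep E T (rk E) (rk T)"
  then have XE: "X \<subseteq> E" and "card X \<le> rk E" and XT: "card (X \<inter> T) \<le> rk T"
    unfolding lambda_indep_def by auto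
  show "X \<in> I"
  proof (rule ccontr)
    assume "X \<notin> I"
    then obtain C where C: "C \<subseteq> X" "circuit E I C" using dep_contains_circuit XE by blast
    have finX: "finite X" using finite_subset_ground[OF XE] .
    have "card C \<le> card X" using card_mono[OF finX C(1)] .
    then have "C \<subseteq> T" "rk T \<le> rk C" using small C(2) \<open>card X \<le> rk E\<close> by auto
    then have "card C \<le> card (X \<inter> T)" using C(1) finX by (intro card_mono) auto
    then have "card C \<le> rk C" using XT \<open>rk T \<le> rk C\<close> by linarith
    then show False using rank_circuit[OF C(2)] card_circuit_pos[OF C(2)] by linarith
  qed
qed

lemma cuspidal_eq_lambda:
  assumes cusp: "cuspidal E I"
  obtains T a where "T \<subseteq> E" "I = lambda_indep E T (rk E) a"
    "(T = {} \<and> a = 0) \<or> (a < rk E \<and> a < card T \<and> card T + rk E \<le> a + card E)"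
proof (cases "\<exists>T. cyclic_flat E I T \<and> T \<noteq> {} \<and> rk T < rk E")
  case True
  then obtain T where T: "cyclic_flat E I T" "T \<noteq> {}" "rk T < rk E" by blast
  have TE: "T \<subseteq> E" using T unfolding cyclic_flat_def flat_def by blast
  have "C \<subseteq> T \<and> rk T \<le> rk C" if "circuit E I C" "card C \<le> rk E" for C
  proof -
    have "cl C = T"
      using cuspidal_cyclic_flat_unique[OF cusp _ _ _ T] cyclic_flat_cl_small_circuit[OF that]
      by blast
    then show ?thesis using subset_cl rank_cl circuit_subset_ground[OF that(1)] by auto
  qed
  then have "I = lambda_indep E T (rk E) (rk T)" by (rule indep_eq_lambda_if_small_circuits[OF TE])
  moreover have "rk T < card T"
    using rank_less_card_if_dep TE cyclic_nonempty_dep T unfolding cyclic_flat_def by blast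
  moreover have "card T + rk E \<le> rk T + card E"
  proof -
    have "T \<union> (E - T) = E" using TE by blast
    then have "rk E \<le> rk T + card (E - T)" using rank_union_le[of "E - T" T] finite_ground by simp
    then show ?thesis
      using card_Diff_subset[OF finite_subset_ground[OF TE] TE] card_mono[OF finite_ground TE]
      by linarith
  qed
  ultimately show ?thesis using that TE T(3) by blast
next
  case False
  have "I = lambda_indep E {} (rk E) (rk {})"
  proof (rule indep_eq_lambda_if_small_circuits)
    show "C \<subseteq> {} \<and> rk {} \<le> rk C" if "circuit E I C" "card C \<le> rk E" for C
      using False cyclic_flat_cl_small_circuit[OF that] by blast
  qed simp
  then show ?thesis using that[of "{}" 0] rank_empty by simp
qed

end

section \<open>The matroids \<open>lambda_indep\<close> are cuspidal\<close>

lemma matroid_lambda_indep: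
  assumes "finite E"
  shows "matroid E (lambda_indep E T k a)"
  unfolding matroid_def
proof (intro conjI ballI allI impI)
  fix X Y assume X: "X \<in> lambda_indep E T k a" and Y: "Y \<subseteq> X"
  have "finite X" using X assms finite_subset unfolding lambda_indep_def by blast
  then have "card Y \<le> card X" "card (Y \<inter> T) \<le> card (X \<inter> T)" using Y by (auto intro: card_mono)
  then show "Y \<in> lambda_indep E T k a" using X Y unfolding lambda_indep_def by auto
next
  fix X Y assume X: "X \<in> lambda_indep E T k a" and Y: "Y \<in> lambda_indep E T k a"
    and less: "card X < card Y"
  have fin: "finite X" "finite Y" using X Y assms finite_subset unfolding lambda_indep_def by blast+
  have X': "X \<subseteq> E" "card (X \<inter> T) \<le> a" and Y': "Y \<subseteq> E" "card Y \<le> k"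
    using X Y unfolding lambda_indep_def by auto
  show "\<exists>e\<in>Y - X. insert e X \<in> lambda_indep E T k a"
  proof (cases "card (X \<inter> T) < a")
    case True
    have "\<not> Y \<subseteq> X" using less card_mono[OF fin(1)] by (meson not_le)
    then obtain e where e: "e \<in> Y" "e \<notin> X" by blast
    have "card (insert e X \<inter> T) \<le> card (insert e (X \<inter> T))" using fin(1) by (intro card_mono) auto
    also have "\<dots> \<le> Suc (card (X \<inter> T))" using fin(1) by (simp add: card_insert_if)
    finally show ?thesis using e True less Y' X' fin(1) unfolding lambda_indep_def by auto
  next
    case False
    then have "card (X - T) < card (Y - T)"
      using card_Int_Diff[OF fin(1), of T] card_Int_Diff[OF fin(2), of T] less Y
      unfolding lambda_indep_def
      by auto
    then have "\<not> Y - T \<subseteq> X - T" using card_mono[OF finite_Diff[OF fin(1)]] by (meson not_le)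
    then obtain e where e: "e \<in> Y" "e \<notin> T" "e \<notin> X" by blast
    then have "insert e X \<inter> T = X \<inter> T" by blast
    then show ?thesis using e less Y' X' fin(1) unfolding lambda_indep_def by auto
  qed
qed (use assms in \<open>auto simp: lambda_indep_def\<close>)

lemma card_insert_Diff:
  assumes "finite A" "x \<notin> A"
  shows "card (insert x A - T) = card (A - T) + (if x \<in> T then 0 else 1)"
proof (cases "x \<in> T")
  case False
  then have "insert x A - T = insert x (A - T)" by blast
  then show ?thesis using False assms by simp
qed (simp add: insert_Diff_if)

text \<open>The rank conditions of \<open>forb_minor_rank_conditions\<close> in a matroid \<open>lambda_indep E T k a\<close>
  contracted by \<open>C\<close>, where \<open>m = |C|\<close>, \<open>s = a + |C - T|\<close> and each \<open>t\<close> is 1 exactly for an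
  element outside \<open>T\<close>.\<close>

lemma forb_rank_config_impossible:
  fixes k m s tl t1 t2 tc :: nat
  assumes "tl \<le> 1" "t1 \<le> 1" "t2 \<le> 1" "tc \<le> 1"
    and "min k (min (m + 1) (s + tl)) \<noteq> min k (min m s) + 1"
    and "min k (min (m + 1) (s + t2)) = min k (min m s) + 1"
    and "min k (min (m + 2) (s + tc + t1)) = min k (min m s) + 2"
    and "min k (min (m + 2) (s + t2 + t1)) \<noteq> min k (min m s) + 2"
  shows False
  using assms unfolding min_def by (auto split: if_splits)

locale lambda_matroid =
  fixes E T :: "'a set" and k a :: nat
  assumes finite_E: "finite E" and T_subset: "T \<subseteq> E" and a_le_k: "a \<le> k"
begin

sublocale fin_matroid E "lambda_indep E T k a"
  by unfold_locales (rule matroid_lambda_indep[OF finite_E])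

lemma rank_lambda:
  assumes A: "A \<subseteq> E"
  shows "rk A = min k (min (card A) (a + card (A - T)))"
proof (rule antisym)
  have finA: "finite A" using A finite_E finite_subset by blast
  obtain X where X: "X \<in> lambda_indep E T k a" "X \<subseteq> A" "card X = rk A"
    using ex_basis unfolding basis_def by blast
  have "card X \<le> k" "card (X \<inter> T) \<le> a" using X(1) unfolding lambda_indep_def by auto
  moreover have "card X \<le> card A" "card (X - T) \<le> card (A - T)"
    using X(2) finA by (auto intro: card_mono)
  moreover have "card X = card (X \<inter> T) + card (X - T)"
    using card_Int_Diff finite_subset[OF X(2) finA] .
  ultimately show "rk A \<le> min k (min (card A) (a + card (A - T)))" using X(3) by linarith
next
  have finA: "finite A" using A finite_E finite_subset by blast
  define m1 where "m1 = min (card (A \<inter> T)) a"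
  define m2 where "m2 = min (card (A - T)) (k - m1)"
  obtain X1 where X1: "X1 \<subseteq> A \<inter> T" "card X1 = m1" "finite X1"
    by (rule obtain_subset_with_card_n[of m1 "A \<inter> T"]) (simp add: m1_def)
  obtain X2 where X2: "X2 \<subseteq> A - T" "card X2 = m2" "finite X2"
    by (rule obtain_subset_with_card_n[of m2 "A - T"]) (simp add: m2_def)
  have card: "card (X1 \<union> X2) = m1 + m2" using card_Un_disjoint[OF X1(3) X2(3)] X1 X2 by auto
  have m: "m1 \<le> a" "m1 + m2 \<le> k" using a_le_k unfolding m1_def m2_def by (auto simp: min_def)
  have "(X1 \<union> X2) \<inter> T = X1" using X1 X2 by blast
  then have "X1 \<union> X2 \<in> lambda_indep E T k a"
    using X1 X2 A card m unfolding lambda_indep_def by auto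
  moreover have "m1 + m2 = min k (min (card A) (a + card (A - T)))"
    using card_Int_Diff[OF finA, of T] a_le_k unfolding m1_def m2_def min_def
    by (auto split: if_splits)
  ultimately show "min k (min (card A) (a + card (A - T))) \<le> rk A"
    using card_le_rank[of "X1 \<union> X2" A] card X1 X2 by auto
qed

lemma rank_lambda_insert:
  assumes "A \<subseteq> E" "x \<in> E" "x \<notin> A"
  shows "rk (insert x A) = min k (min (card A + 1) (a + card (A - T) + (if x \<in> T then 0 else 1)))"
  using rank_lambda[of "insert x A"] card_insert_Diff[of A x T] finite_subset_ground[of A] assms
  by (simp add: add.assoc)

lemma rank_ground_le: "rk E \<le> k"
  using rank_lambda[of E] by simp

lemma card_circuit_subset_T:
  assumes C: "circuit E (lambda_indep E T k a) C" and "C \<subseteq> T"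
  shows "card C = Suc a"
proof -
  have "C - T = {}" using assms(2) by blast
  then have "card (C - T) = 0" by (simp only: card.empty)
  then have "rk C = min k (min (card C) a)" using rank_lambda[OF circuit_subset_ground[OF C]]
    by simp
  then show ?thesis using rank_circuit[OF C] card_circuit_pos[OF C] a_le_k
    by (simp add: min_def split: if_splits)
qed

lemma rank_circuit_not_subset_T:
  assumes C: "circuit E (lambda_indep E T k a) C" and x: "x \<in> C" "x \<notin> T"
  shows "rk C = k"
proof -
  have CE: "C \<subseteq> E" and finC: "finite C" using C circuit_subset_ground finite_circuit by blast+
  have "x \<in> C - T" using x by blast
  then have cardCT: "card (C - {x} - T) = card (C - T) - 1" "0 < card (C - T)"
    using finC by (auto simp: card_gt_0_iff Diff_insert2[symmetric] Diff_insert_absorb)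
  have "rk (C - {x}) = card C - 1"
    using rank_indep[OF circuit_remove_indep[OF C x(1)]] finC x(1) by simp
  moreover have "rk (C - {x}) = min k (min (card C - 1) (a + card (C - {x} - T)))"
    using rank_lambda[of "C - {x}"] CE finC x(1) by (simp add: Diff_subset[THEN order_trans])
  ultimately have "card C \<le> a + card (C - T)" using cardCT by (simp add: min_def split: if_splits)
  then have "rk C = min k (card C)" using rank_lambda[OF CE] by (simp add: min_def)
  then show ?thesis using rank_circuit[OF C] card_circuit_pos[OF C]
    by (simp add: min_def split: if_splits)
qed

lemma cyclic_flat_lambda_cases:
  assumes F: "cyclic_flat E (lambda_indep E T k a) F"
  shows "F = {} \<or> F = T \<or> F = E"
proof -
  have FE: "F \<subseteq> E" and fl: "flat E (lambda_indep E T k a) F"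
    and cy: "cyclic E (lambda_indep E T k a) F"
    using F unfolding cyclic_flat_def flat_def by blast+
  consider "F = {}" | "F \<noteq> {}" "F \<subseteq> T" | x where "x \<in> F" "x \<notin> T" by blast
  then show ?thesis
  proof cases
    case 2
    then obtain C where C: "circuit E (lambda_indep E T k a) C" "C \<subseteq> F"
      using cyclic_ex_circuit[OF cy] by blast
    then have "a = rk C" using card_circuit_subset_T rank_circuit 2(2) by fastforce
    also have "\<dots> \<le> rk F" using C(2) by (rule rank_mono)
    finally have aF: "a \<le> rk F" .
    have "T \<subseteq> F"
    proof
      fix e assume e: "e \<in> T"
      show "e \<in> F"
      proof (rule ccontr)
        assume eF: "e \<notin> F"
        have "insert e F - T = {}" using e 2(2) by blast
        then have "card (insert e F - T) = 0" by (simp only: card.empty)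
        then have "rk (insert e F) \<le> a" using rank_lambda[of "insert e F"] FE e T_subset by auto
        moreover have "rk F < rk (insert e F)" using flat_rank_insert_less fl e T_subset eF by blast
        ultimately show False using aF by simp
      qed
    qed
    then show ?thesis using 2(2) by blast
  next
    case 3
    then obtain C where C: "circuit E (lambda_indep E T k a) C" "C \<subseteq> F" "x \<in> C"
      using cyclic_ex_circuit[OF cy] by blast
    have "k = rk C" using rank_circuit_not_subset_T C(1,3) 3(2) by simp
    also have "\<dots> \<le> rk F" using C(2) by (rule rank_mono)
    finally have "rk F = rk E" using rank_ground_le rank_le_rank_ground[of F] by linarith
    then show ?thesis using flat_eq_ground_if_rank fl by blast
  qed simp
qed

lemma schubert_lambda: "schubert E (lambda_indep E T k a)"
  unfolding schubert_def using cyclic_flat_lambda_cases T_subset by blast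

lemma elementary_split_lambda: "elementary_split E (lambda_indep E T k a)"
  unfolding elementary_split_def
proof
  assume "\<exists>C D. C \<subseteq> E \<and> D \<subseteq> E \<and> C \<inter> D = {}
    \<and> miso (E - (C \<union> D)) (minor_indep E (lambda_indep E T k a) C D) forb_ground forb_indep"
  then obtain C D where C: "C \<subseteq> E"
    and iso: "miso (E - (C \<union> D)) (minor_indep E (lambda_indep E T k a) C D) forb_ground forb_indep"
    by blast
  obtain l p1 p2 c where S: "{l, p1, p2, c} \<subseteq> E - C" and dist: "distinct [l, p1, p2, c]"
    and r: "rk (insert l C) \<noteq> rk C + 1" "rk (insert p2 C) = rk C + 1"
      "rk (insert p1 (insert c C)) = rk C + 2" "rk (insert p1 (insert p2 C)) \<noteq> rk C + 2"
    by (rule forb_minor_rank_conditions[OF iso])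
  define t :: "'a \<Rightarrow> nat" where "t x = (if x \<in> T then 0 else 1)" for x
  define s where "s = a + card (C - T)"
  have finC: "finite C" using finite_subset_ground[OF C] .
  have r0: "rk C = min k (min (card C) s)" using rank_lambda[OF C] unfolding s_def .
  have r1: "rk (insert x C) = min k (min (card C + 1) (s + t x))" if "x \<in> E - C" for x
    using rank_lambda_insert[OF C, of x] that unfolding s_def t_def by simp
  have r2: "rk (insert x (insert y C)) = min k (min (card C + 2) (s + t y + t x))"
    if "x \<in> E - C" "y \<in> E - C" "x \<noteq> y" for x y
    using rank_lambda_insert[of "insert y C" x] card_insert_Diff[OF finC, of y T] that C finC
    unfolding s_def t_def by simp
  have mem: "l \<in> E - C" "p1 \<in> E - C" "p2 \<in> E - C" "c \<in> E - C" using S by auto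
  have ne: "p1 \<noteq> c" "p1 \<noteq> p2" using dist by auto
  have t: "t x \<le> 1" for x unfolding t_def by simp
  show False
  proof (rule forb_rank_config_impossible[OF t t t t])
    show "min k (min (card C + 1) (s + t l)) \<noteq> min k (min (card C) s) + 1"
      using r(1) unfolding r1[OF mem(1)] r0 .
    show "min k (min (card C + 1) (s + t p2)) = min k (min (card C) s) + 1"
      using r(2) unfolding r1[OF mem(3)] r0 .
    show "min k (min (card C + 2) (s + t c + t p1)) = min k (min (card C) s) + 2"
      using r(3) unfolding r2[OF mem(2) mem(4) ne(1)] r0 .
    show "min k (min (card C + 2) (s + t p2 + t p1)) \<noteq> min k (min (card C) s) + 2"
      using r(4) unfolding r2[OF mem(2) mem(3) ne(2)] r0 .
  qed
qed

lemma cuspidal_lambda: "cuspidal E (lambda_indep E T k a)"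
  unfolding cuspidal_def using schubert_lambda elementary_split_lambda by blast

end

lemma miso_lambda_indep:
  assumes h: "bij_betw h E E'" and T: "T \<subseteq> E"
  shows "miso E (lambda_indep E T k a) E' (lambda_indep E' (h ` T) k a)"
  unfolding miso_def
proof (intro exI conjI allI impI)
  fix X assume X: "X \<subseteq> E"
  have inj: "inj_on h E" using h by (rule bij_betw_imp_inj_on)
  have "card (h ` X) = card X" using card_image[OF inj_on_subset[OF inj X]] .
  moreover have "h ` X \<inter> h ` T = h ` (X \<inter> T)" using inj_on_image_Int[OF inj X T] by simp
  moreover have "card (h ` (X \<inter> T)) = card (X \<inter> T)"
    using card_image[OF inj_on_subset[OF inj, of "X \<inter> T"]] X by blast
  moreover have "h ` X \<subseteq> E'" using X bij_betw_imp_surj_on[OF h] by blast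
  ultimately show "X \<in> lambda_indep E T k a \<longleftrightarrow> h ` X \<in> lambda_indep E' (h ` T) k a"
    using X unfolding lambda_indep_def by simp
qed (rule h)

lemma ex_bij_betw_initial_segment:
  assumes T: "T \<subseteq> {0..<n}"
  shows "\<exists>h. bij_betw h {0..<n} {0..<n} \<and> h ` T = {0..<card T}"
proof -
  have finT: "finite T" using T finite_subset by blast
  have b: "card T \<le> n" using card_mono[OF _ T] by simp
  obtain h1 where h1: "bij_betw h1 T {0..<card T}" using ex_bij_betw_finite_nat[OF finT]
    by (auto simp: atLeast0LessThan)
  have "card ({0..<n} - T) = card {card T..<n}" using T finT by (simp add: card_Diff_subset)
  then obtain h2 where h2: "bij_betw h2 ({0..<n} - T) {card T..<n}"
    using finite_same_card_bij[of "{0..<n} - T" "{card T..<n}"] by blast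
  define h where "h x = (if x \<in> T then h1 x else h2 x)" for x
  have "bij_betw h T {0..<card T}" using h1
    by (rule bij_betw_cong[THEN iffD1, rotated]) (simp add: h_def)
  moreover have "bij_betw h ({0..<n} - T) {card T..<n}"
    using h2 by (rule bij_betw_cong[THEN iffD1, rotated]) (simp add: h_def)
  ultimately have "bij_betw h (T \<union> ({0..<n} - T)) ({0..<card T} \<union> {card T..<n})"
    by (rule bij_betw_combine) auto
  moreover have "T \<union> ({0..<n} - T) = {0..<n}" "{0..<card T} \<union> {card T..<n} = {0..<n}" using T b
    by auto
  ultimately show ?thesis using bij_betw_imp_surj_on[OF \<open>bij_betw h T {0..<card T}\<close>] by auto
qed

text \<open>\<open>(0, 0)\<close> stands for the uniform matroid; otherwise \<open>{0..<b}\<close> is the proper cyclic flat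
  and \<open>a\<close> its rank.\<close>

definition cusp_params :: "nat \<Rightarrow> nat \<Rightarrow> (nat \<times> nat) set" where
  "cusp_params k n = {(a, b). (a < k \<and> a < b \<and> b + k \<le> a + n) \<or> (a = 0 \<and> b = 0)}"

fun cusp_rep :: "nat \<Rightarrow> nat \<Rightarrow> nat \<times> nat \<Rightarrow> nat set set" where
  "cusp_rep k n (a, b) = lambda_indep {0..<n} {0..<b} k a"

lemma finite_cusp_params: "finite (cusp_params k n)"
  by (rule finite_subset[of _ "{0..n + k} \<times> {0..n + k}"]) (auto simp: cusp_params_def)

lemma card_cusp_params:
  assumes "k \<le> n"
  shows "card (cusp_params k n) = k * (n - k) + 1"
proof -
  have "cusp_params k n = insert (0, 0) (SIGMA a:{..<k}. {a + 1..a + (n - k)})"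
    unfolding cusp_params_def using assms by auto
  moreover have "card (SIGMA a:{..<k}. {a + 1..a + (n - k)}) = k * (n - k)" by simp
  ultimately show ?thesis by simp
qed

lemma cusp_rep_in_cusp_set:
  assumes "k \<le> n" and p: "p \<in> cusp_params k n"
  shows "cusp_rep k n p \<in> cusp_set k n"
proof -
  obtain a b where ab: "p = (a, b)" by fastforce
  have a: "a \<le> k" and b: "b \<le> n" "k \<le> a + (n - b)" using p assms unfolding ab cusp_params_def
    by auto
  interpret lambda_matroid "{0..<n}" "{0..<b}" k a using a b by unfold_locales auto
  have "rk {0..<n} = k" using rank_lambda[of "{0..<n}"] b assms(1) by simp
  then show ?thesis using matroid cuspidal_lambda unfolding cusp_set_def ab by simp
qed

lemma cusp_set_iso_cusp_rep:
  assumes I: "I \<in> cusp_set k n"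
  shows "\<exists>p\<in>cusp_params k n. miso {0..<n} I {0..<n} (cusp_rep k n p)"
proof -
  interpret fin_matroid "{0..<n}" I using I unfolding cusp_set_def by unfold_locales blast
  have rk: "rk {0..<n} = k" and cusp: "cuspidal {0..<n} I" using I unfolding cusp_set_def by auto
  obtain T a where T: "T \<subseteq> {0..<n}" and I_eq: "I = lambda_indep {0..<n} T k a"
    and par: "(T = {} \<and> a = 0) \<or> (a < k \<and> a < card T \<and> card T + k \<le> a + n)"
    using cuspidal_eq_lambda[OF cusp] unfolding rk by auto
  obtain h where h: "bij_betw h {0..<n} {0..<n}" "h ` T = {0..<card T}"
    using ex_bij_betw_initial_segment[OF T] by blast
  have "miso {0..<n} I {0..<n} (cusp_rep k n (a, card T))"
    using miso_lambda_indep[OF h(1) T] h(2) I_eq by simp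
  moreover have "(a, card T) \<in> cusp_params k n" using par unfolding cusp_params_def by auto
  ultimately show ?thesis by blast
qed

section \<open>Corank-nullity coefficients of Tutte polynomials\<close>

lemma map_poly_add_hom:
  assumes "f 0 = 0" "\<And>x y. f (x + y) = f x + f y"
  shows "map_poly f (p + q) = map_poly f p + map_poly f q"
  by (intro poly_eqI) (simp add: coeff_map_poly assms)

lemma map_poly_mult_hom:
  fixes f :: "'a::comm_ring_1 \<Rightarrow> 'b::comm_ring_1"
  assumes f0: "f 0 = 0" and f_add: "\<And>x y. f (x + y) = f x + f y"
    and f_mult: "\<And>x y. f (x * y) = f x * f y"
  shows "map_poly f (p * q) = map_poly f p * map_poly f q"
proof (induction p rule: pCons_induct)
  case (pCons a p)
  have "map_poly f (pCons a p * q) = map_poly f (smult a q + pCons 0 (p * q))" by simp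
  also have "\<dots> = smult (f a) (map_poly f q) + pCons 0 (map_poly f (p * q))"
    by (simp add: map_poly_add_hom[OF f0 f_add] map_poly_smult[where f = f, OF f0 f_mult]
        map_poly_pCons[where f = f, OF f0] f0)
  also have "\<dots> = map_poly f (pCons a p) * map_poly f q"
    using pCons.IH by (simp add: map_poly_pCons[where f = f, OF f0])
  finally show ?case .
qed simp

text \<open>\<open>shift P\<close> is \<open>P(x + 1, y + 1)\<close>.\<close>

definition shift :: "int poly poly \<Rightarrow> int poly poly" where
  "shift P = pcompose (map_poly (\<lambda>q. pcompose q [:1, 1:]) P) [:1, 1:]"

lemma shift_add: "shift (P + Q) = shift P + shift Q"
  unfolding shift_def by (simp add: map_poly_add_hom pcompose_add)

lemma shift_mult: "shift (P * Q) = shift P * shift Q"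
  unfolding shift_def by (simp add: map_poly_mult_hom pcompose_add pcompose_mult)

lemma shift_1: "shift 1 = 1"
  unfolding shift_def by (simp add: pcompose_1)

lemma shift_0: "shift 0 = 0"
  unfolding shift_def by simp

lemma shift_diff: "shift (P - Q) = shift P - shift Q"
  using shift_add[of "P - Q" Q] by (simp add: eq_diff_eq)

lemma shift_power: "shift (P ^ m) = shift P ^ m"
  by (induction m) (simp_all add: shift_1 shift_mult)

lemma shift_sum: "shift (sum f A) = (\<Sum>x\<in>A. shift (f x))"
  by (induction A rule: infinite_finite_induct) (simp_all add: shift_0 shift_add)

lemma shift_of_int: "shift (of_int c) = of_int c"
  unfolding shift_def by (simp add: of_int_poly map_poly_pCons)

lemma shift_varX: "shift varX = varX + 1"
proof -
  have "pcompose [:0, 1:] [:1, 1:] = [:1, 1::int:]" by (simp add: pcompose_pCons)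
  then show ?thesis unfolding shift_def varX_def by (simp add: map_poly_pCons one_pCons)
qed

lemma shift_varY: "shift varY = varY + 1"
  unfolding shift_def varY_def by (simp add: map_poly_pCons pcompose_pCons one_pCons)

lemma shift_monomial: "shift ((varX - 1) ^ i * (varY - 1) ^ j) = monom (monom 1 i) j"
proof -
  have "varX ^ i = [:monom 1 i:]"
    unfolding varX_def by (induction i) (simp_all add: monom_altdef one_pCons)
  moreover have "varY ^ j = monom 1 j" unfolding varY_def by (simp add: monom_altdef)
  ultimately show ?thesis
    by (simp add: shift_mult shift_power shift_diff shift_1 shift_varX shift_varY smult_monom)
qed

definition corank_nullity_coeff :: "nat \<Rightarrow> nat \<Rightarrow> int poly poly \<Rightarrow> int" where
  "corank_nullity_coeff i j P = coeff (coeff (shift P) j) i"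

lemma corank_nullity_coeff_0: "corank_nullity_coeff i j 0 = 0"
  unfolding corank_nullity_coeff_def by (simp add: shift_0)

lemma corank_nullity_coeff_sum:
  "corank_nullity_coeff i j (sum f A) = (\<Sum>x\<in>A. corank_nullity_coeff i j (f x))"
  unfolding corank_nullity_coeff_def by (simp add: shift_sum coeff_sum)

lemma corank_nullity_coeff_of_int_mult:
  "corank_nullity_coeff i j (of_int c * P) = c * corank_nullity_coeff i j P"
proof -
  have "shift (of_int c * P) = of_int c * shift P" by (simp only: shift_mult shift_of_int)
  then show ?thesis unfolding corank_nullity_coeff_def by (simp add: of_int_poly)
qed

lemma corank_nullity_coeff_tutte:
  assumes "finite E"
  shows "corank_nullity_coeff i j (tutte E I)
    = int (card {A \<in> Pow E. mrank I E - mrank I A = i \<and> card A - mrank I A = j})"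
proof -
  have "corank_nullity_coeff i j (tutte E I)
      = (\<Sum>A\<in>Pow E. of_bool (mrank I E - mrank I A = i \<and> card A - mrank I A = j))"
    unfolding tutte_def corank_nullity_coeff_sum unfolding corank_nullity_coeff_def shift_monomial
    by (intro sum.cong) auto
  also have "\<dots> = int (card (Pow E \<inter> {A. mrank I E - mrank I A = i \<and> card A - mrank I A = j}))"
    using assms by (simp add: sum_of_bool_eq)
  also have "Pow E \<inter> {A. mrank I E - mrank I A = i \<and> card A - mrank I A = j}
      = {A \<in> Pow E. mrank I E - mrank I A = i \<and> card A - mrank I A = j}"
    by blast
  finally show ?thesis .
qed

section \<open>Linear independence of the Tutte polynomials\<close>

lemma triangular_combination_eq_0:
  fixes c :: "'p \<Rightarrow> 'a::idom" and L :: "'p \<Rightarrow> 'p \<Rightarrow> 'a" and key :: "'p \<Rightarrow> 'k::linorder"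
  assumes Q: "finite Q" "inj_on key Q"
    and sums: "\<And>q. q \<in> Q \<Longrightarrow> (\<Sum>p\<in>Q. c p * L q p) = 0"
    and diag: "\<And>q. q \<in> Q \<Longrightarrow> L q q \<noteq> 0"
    and triangular: "\<And>q p. q \<in> Q \<Longrightarrow> p \<in> Q \<Longrightarrow> key q < key p \<Longrightarrow> L q p = 0"
  shows "\<forall>p\<in>Q. c p = 0"
proof (rule ccontr)
  define S where "S = {p \<in> Q. c p \<noteq> 0}"
  assume "\<not> (\<forall>p\<in>Q. c p = 0)"
  then have "S \<noteq> {}" "finite S" using Q(1) unfolding S_def by auto
  then obtain q where q: "q \<in> S" "\<And>p. p \<in> S \<Longrightarrow> \<not> key p < key q"
    using arg_min_if_finite[of S key] by blast
  have qQ: "q \<in> Q" and cq: "c q \<noteq> 0" using q(1) unfolding S_def by auto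
  have "c p * L q p = 0" if p: "p \<in> Q - {q}" for p
  proof (cases "c p = 0")
    case False
    then have "key q \<le> key p" using q(2)[of p] p unfolding S_def by auto
    moreover have "key q \<noteq> key p" using inj_onD[OF Q(2)] p qQ by blast
    ultimately show ?thesis using triangular[OF qQ, of p] p by simp
  qed simp
  then have "(\<Sum>p\<in>Q. c p * L q p) = c q * L q q"
    using sum.remove[OF Q(1) qQ, of "\<lambda>p. c p * L q p"] by (simp add: sum.neutral)
  then show False using sums[OF qQ] diag[OF qQ] cq by simp
qed

lemma cusp_params_bounds:
  assumes "(a, b) \<in> cusp_params k n"
  shows "b \<le> n" "a \<le> b" "a \<le> k" "b \<noteq> 0 \<Longrightarrow> a < k \<and> a < b" "b = 0 \<Longrightarrow> a = 0"
  using assms unfolding cusp_params_def by auto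

lemma corank_nullity_coeff_cusp_rep_diag:
  assumes "k \<le> n" "(a, b) \<in> cusp_params k n"
  shows "corank_nullity_coeff (k - a) (b - a) (tutte {0..<n} (cusp_rep k n (a, b))) \<noteq> 0"
proof -
  note ab = cusp_params_bounds[OF assms(2)]
  interpret lambda_matroid "{0..<n}" "{0..<b}" k a using ab by unfold_locales auto
  have "rk {0..<n} = k" using cusp_rep_in_cusp_set[OF assms] unfolding cusp_set_def by simp
  moreover have "rk {0..<b} = a" using rank_lambda[of "{0..<b}"] ab by simp
  ultimately have "{0..<b} \<in> {A \<in> Pow {0..<n}. rk {0..<n} - rk A = k - a \<and> card A - rk A = b - a}"
    using ab by auto
  then show ?thesis unfolding corank_nullity_coeff_tutte[OF finite_atLeastLessThan] cusp_rep.simps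
    by (auto simp: card_eq_0_iff)
qed

lemma corank_nullity_coeff_cusp_rep_eq_0:
  assumes "k \<le> n" "(a, b) \<in> cusp_params k n" "(a', b') \<in> cusp_params k n" "b \<noteq> 0"
    and later: "a < a' \<or> (a' = a \<and> b' < b) \<or> b' = 0"
  shows "corank_nullity_coeff (k - a) (b - a) (tutte {0..<n} (cusp_rep k n (a', b'))) = 0"
proof -
  note ab = cusp_params_bounds[OF assms(2)] and ab' = cusp_params_bounds[OF assms(3)]
  interpret lambda_matroid "{0..<n}" "{0..<b'}" k a' using ab' by unfold_locales auto
  have "A \<notin> Pow {0..<n}" if "rk {0..<n} - rk A = k - a" "card A - rk A = b - a" for A
  proof
    assume A: "A \<in> Pow {0..<n}"
    have rA: "rk A = min k (min (card A) (a' + card (A - {0..<b'})))" using rank_lambda A by blast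
    have "rk {0..<n} = k" using cusp_rep_in_cusp_set[OF assms(1,3)] unfolding cusp_set_def by simp
    then have "rk A = a" using that(1) rA ab(4)[OF assms(4)] by linarith
    then have "card A = b" using that(2) rA ab(4)[OF assms(4)] by linarith
    then have a_eq: "a = a' + card (A - {0..<b'})" using rA \<open>rk A = a\<close> ab(4)[OF assms(4)]
      by linarith
    show False
      using later
    proof (elim disjE conjE)
      assume "a' = a" "b' < b"
      then have "A - {0..<b'} = {}" using a_eq finite_subset[OF _ finite_atLeastLessThan] A by auto
      then have "card A \<le> b'" using card_mono[of "{0..<b'}" A] by auto
      then show False using \<open>card A = b\<close> \<open>b' < b\<close> by simp
    next
      assume "b' = 0"
      then show False using a_eq ab'(5) \<open>card A = b\<close> ab(4)[OF assms(4)] by simp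
    qed (use a_eq in simp)
  qed
  then show ?thesis unfolding corank_nullity_coeff_tutte[OF finite_atLeastLessThan] cusp_rep.simps
    by auto
qed

lemma tutte_cusp_rep_lin_indep:
  assumes kn: "k \<le> n" and Q: "Q \<subseteq> cusp_params k n"
    and sum0: "(\<Sum>p\<in>Q. of_int (c p) * tutte {0..<n} (cusp_rep k n p)) = 0"
  shows "\<forall>p\<in>Q. c p = 0"
proof -
  define L where
    "L q p = corank_nullity_coeff (k - fst q) (snd q - fst q) (tutte {0..<n} (cusp_rep k n p))" for q p
  define key where "key p = (if snd p = 0 then k else fst p, n - snd p)" for p :: "nat \<times> nat"
    \<comment> \<open>\<open>(0, 0)\<close> comes last, the other parameters by increasing \<open>a\<close>, then decreasing \<open>b\<close>\<close>
  show ?thesis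
  proof (rule triangular_combination_eq_0[of Q key c L])
    show "finite Q" using finite_subset[OF Q finite_cusp_params] .
    show "inj_on key Q"
    proof (rule inj_onI)
      fix p q assume pq: "p \<in> Q" "q \<in> Q" "key p = key q"
      obtain a b a' b' where p: "p = (a, b)" and q: "q = (a', b')" by fastforce
      have "(a, b) \<in> cusp_params k n" "(a', b') \<in> cusp_params k n" using pq Q p q by auto
      then show "p = q" using pq(3) unfolding p q key_def cusp_params_def by (auto split: if_splits)
    qed
    show "(\<Sum>p\<in>Q. c p * L q p) = 0" for q
      using arg_cong[OF sum0, of "corank_nullity_coeff (k - fst q) (snd q - fst q)"]
      unfolding L_def corank_nullity_coeff_sum corank_nullity_coeff_of_int_mult
        corank_nullity_coeff_0 .
    show "L q q \<noteq> 0" if "q \<in> Q" for q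
      using corank_nullity_coeff_cusp_rep_diag[OF kn, of "fst q" "snd q"] that Q unfolding L_def
      by auto
    show "L q p = 0" if "q \<in> Q" "p \<in> Q" "key q < key p" for q p
    proof -
      obtain a b a' b' where q: "q = (a, b)" and p: "p = (a', b')" by fastforce
      have qP: "(a, b) \<in> cusp_params k n" and pP: "(a', b') \<in> cusp_params k n" using that Q q p
        by auto
      have "b \<noteq> 0" "a < a' \<or> (a' = a \<and> b' < b) \<or> b' = 0"
        using that(3) qP pP unfolding q p key_def cusp_params_def by (auto split: if_splits)
      then show ?thesis using corank_nullity_coeff_cusp_rep_eq_0[OF kn qP pP] unfolding L_def q p
        by simp
    qed
  qed
qed

section \<open>Isomorphism classes\<close>

lemma miso_refl: "miso E I E I"
  unfolding miso_def by (intro exI[of _ id]) simp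

lemma miso_sym:
  assumes "miso E1 I1 E2 I2"
  shows "miso E2 I2 E1 I1"
proof -
  obtain f where f: "bij_betw f E1 E2" and iso: "\<forall>X. X \<subseteq> E1 \<longrightarrow> (X \<in> I1 \<longleftrightarrow> f ` X \<in> I2)"
    using assms unfolding miso_def by blast
  have g: "bij_betw (inv_into E1 f) E2 E1" by (rule bij_betw_inv_into[OF f])
  have "Y \<in> I2 \<longleftrightarrow> inv_into E1 f ` Y \<in> I1" if Y: "Y \<subseteq> E2" for Y
  proof -
    have "inv_into E1 f ` Y \<subseteq> E1" using Y bij_betw_imp_surj_on[OF g] by blast
    moreover have "f ` inv_into E1 f ` Y = Y"
      by (rule image_inv_into_cancel[OF bij_betw_imp_surj_on[OF f] Y])
    ultimately show ?thesis using iso by simp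
  qed
  then show ?thesis unfolding miso_def using g by blast
qed

lemma miso_trans:
  assumes "miso E1 I1 E2 I2" "miso E2 I2 E3 I3"
  shows "miso E1 I1 E3 I3"
proof -
  obtain f where f: "bij_betw f E1 E2" and iso1: "\<forall>X. X \<subseteq> E1 \<longrightarrow> (X \<in> I1 \<longleftrightarrow> f ` X \<in> I2)"
    using assms(1) unfolding miso_def by blast
  obtain g where g: "bij_betw g E2 E3" and iso2: "\<forall>X. X \<subseteq> E2 \<longrightarrow> (X \<in> I2 \<longleftrightarrow> g ` X \<in> I3)"
    using assms(2) unfolding miso_def by blast
  have "X \<in> I1 \<longleftrightarrow> (g \<circ> f) ` X \<in> I3" if X: "X \<subseteq> E1" for X
  proof -
    have "f ` X \<subseteq> E2" using X bij_betw_imp_surj_on[OF f] by blast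
    then show ?thesis using iso1 iso2 X by (simp add: image_comp)
  qed
  then show ?thesis unfolding miso_def using bij_betw_trans[OF f g] by blast
qed

lemma mrank_image:
  assumes f: "inj_on f E1" and iso: "\<forall>X. X \<subseteq> E1 \<longrightarrow> (X \<in> I1 \<longleftrightarrow> f ` X \<in> I2)" and A: "A \<subseteq> E1"
  shows "mrank I2 (f ` A) = mrank I1 A"
proof -
  have "{Y. Y \<in> I2 \<and> Y \<subseteq> f ` A} = image f ` {X. X \<in> I1 \<and> X \<subseteq> A}"
  proof (intro equalityI subsetI)
    fix Y assume Y: "Y \<in> {Y. Y \<in> I2 \<and> Y \<subseteq> f ` A}"
    define X where "X = {x \<in> A. f x \<in> Y}"
    have "f ` X = Y" using Y unfolding X_def by blast
    moreover have "X \<subseteq> A" unfolding X_def by blast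
    ultimately show "Y \<in> image f ` {X. X \<in> I1 \<and> X \<subseteq> A}" using Y iso A by auto
  qed (use iso A in auto)
  moreover have "card (f ` X) = card X" if "X \<subseteq> A" for X
    using card_image[OF inj_on_subset[OF f]] that A by blast
  ultimately have "card ` {Y. Y \<in> I2 \<and> Y \<subseteq> f ` A} = card ` {X. X \<in> I1 \<and> X \<subseteq> A}"
    by (simp add: image_image)
  then show ?thesis unfolding mrank_def by simp
qed

lemma tutte_miso:
  assumes "miso E1 I1 E2 I2"
  shows "tutte E1 I1 = tutte E2 I2"
proof -
  obtain f where f: "bij_betw f E1 E2" and iso: "\<forall>X. X \<subseteq> E1 \<longrightarrow> (X \<in> I1 \<longleftrightarrow> f ` X \<in> I2)"
    using assms unfolding miso_def by blast
  have inj: "inj_on f E1" using f by (rule bij_betw_imp_inj_on)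
  have rank: "mrank I2 (f ` A) = mrank I1 A" "card (f ` A) = card A" if "A \<subseteq> E1" for A
    using mrank_image[OF inj iso that] card_image[OF inj_on_subset[OF inj that]] by auto
  have ground: "mrank I2 E2 = mrank I1 E1" using rank(1)[of E1] bij_betw_imp_surj_on[OF f] by simp
  have "tutte E2 I2 = (\<Sum>A\<in>Pow E1. (varX - 1) ^ (mrank I2 E2 - mrank I2 (f ` A))
      * (varY - 1) ^ (card (f ` A) - mrank I2 (f ` A)))"
    unfolding tutte_def by (rule sum.reindex_bij_betw[OF bij_betw_image_Pow[OF f], symmetric])
  also have "\<dots> = tutte E1 I1" unfolding tutte_def ground by (intro sum.cong) (simp_all add: rank)
  finally show ?thesis by simp
qed

lemma equiv_iso_rel: "equiv (cusp_set k n) (iso_rel k n)"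
  by (rule equivI)
    (auto simp: iso_rel_def refl_on_def sym_def trans_def intro: miso_refl miso_sym miso_trans)

lemma cusp_rep_miso_imp_eq:
  assumes kn: "k \<le> n" and p: "p \<in> cusp_params k n" and q: "q \<in> cusp_params k n"
    and iso: "miso {0..<n} (cusp_rep k n p) {0..<n} (cusp_rep k n q)"
  shows "p = q"
proof (rule ccontr)
  assume "p \<noteq> q"
  define c :: "nat \<times> nat \<Rightarrow> int" where "c x = (if x = p then 1 else -1)" for x
  have "(\<Sum>x\<in>{p, q}. of_int (c x) * tutte {0..<n} (cusp_rep k n x)) = 0"
    using \<open>p \<noteq> q\<close> tutte_miso[OF iso] unfolding c_def by simp
  then have "c p = 0" using tutte_cusp_rep_lin_indep[OF kn, of "{p, q}" c] p q by blast
  then show False unfolding c_def by simp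
qed

lemma bij_betw_cusp_params_classes:
  assumes kn: "k \<le> n"
  shows "bij_betw (\<lambda>p. iso_rel k n `` {cusp_rep k n p})
    (cusp_params k n) (cusp_set k n // iso_rel k n)"
  unfolding bij_betw_def
proof
  show "inj_on (\<lambda>p. iso_rel k n `` {cusp_rep k n p}) (cusp_params k n)"
  proof (rule inj_onI)
    fix p q assume p: "p \<in> cusp_params k n" and q: "q \<in> cusp_params k n"
      and "iso_rel k n `` {cusp_rep k n p} = iso_rel k n `` {cusp_rep k n q}"
    then have "(cusp_rep k n p, cusp_rep k n q) \<in> iso_rel k n"
      using eq_equiv_class_iff[OF equiv_iso_rel] cusp_rep_in_cusp_set[OF kn] by blast
    then show "p = q" using cusp_rep_miso_imp_eq[OF kn p q] unfolding iso_rel_def by blast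
  qed
  show "(\<lambda>p. iso_rel k n `` {cusp_rep k n p}) ` cusp_params k n = cusp_set k n // iso_rel k n"
  proof (intro equalityI subsetI)
    fix X assume "X \<in> cusp_set k n // iso_rel k n"
    then obtain I where I: "I \<in> cusp_set k n" "X = iso_rel k n `` {I}" by (rule quotientE)
    obtain p where p: "p \<in> cusp_params k n" "miso {0..<n} I {0..<n} (cusp_rep k n p)"
      using cusp_set_iso_cusp_rep[OF I(1)] by blast
    then have "(I, cusp_rep k n p) \<in> iso_rel k n"
      using I(1) cusp_rep_in_cusp_set[OF kn] unfolding iso_rel_def by blast
    then show "X \<in> (\<lambda>p. iso_rel k n `` {cusp_rep k n p}) ` cusp_params k n"
      using equiv_class_eq[OF equiv_iso_rel] I(2) p(1) by blast
  qed (auto intro: quotientI cusp_rep_in_cusp_set[OF kn])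
qed

lemma lin_indep_reindex:
  fixes t :: "'j \<Rightarrow> 'a::comm_ring_1" and u :: "'q \<Rightarrow> 'a"
  assumes inj: "inj_on \<pi> R" and t: "\<And>J. J \<in> R \<Longrightarrow> t J = u (\<pi> J)"
    and indep: "\<And>d. (\<Sum>q\<in>\<pi> ` R. of_int (d q) * u q) = 0 \<Longrightarrow> \<forall>q\<in>\<pi> ` R. d q = 0"
    and sum0: "(\<Sum>J\<in>R. of_int (c J) * t J) = 0"
  shows "\<forall>J\<in>R. c J = 0"
proof -
  define d where "d q = c (inv_into R \<pi> q)" for q
  have "(\<Sum>q\<in>\<pi> ` R. of_int (d q) * u q) = (\<Sum>J\<in>R. of_int (c J) * t J)"
    unfolding sum.reindex[OF inj] by (intro sum.cong) (simp_all add: d_def t inv_into_f_f[OF inj])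
  then show ?thesis using indep[of d] sum0 inv_into_f_f[OF inj] unfolding d_def by auto
qed

lemma representatives_tutte_lin_indep:
  assumes kn: "k \<le> n" and R: "R \<subseteq> cusp_set k n"
    and uniq: "\<forall>I\<in>cusp_set k n. \<exists>!J. J \<in> R \<and> miso {0..<n} I {0..<n} J"
    and sum0: "(\<Sum>J\<in>R. of_int (c J) * tutte {0..<n} J) = 0"
  shows "\<forall>J\<in>R. c J = 0"
proof -
  define \<pi> where
    "\<pi> J = (SOME p. p \<in> cusp_params k n \<and> miso {0..<n} J {0..<n} (cusp_rep k n p))" for J
  have \<pi>: "\<pi> J \<in> cusp_params k n" "miso {0..<n} J {0..<n} (cusp_rep k n (\<pi> J))" if "J \<in> R" for J
    using someI_ex[OF cusp_set_iso_cusp_rep[of J k n, unfolded Bex_def]] that R unfolding \<pi>_def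
    by auto
  have inj: "inj_on \<pi> R"
  proof (rule inj_onI)
    fix J J' assume J: "J \<in> R" "J' \<in> R" "\<pi> J = \<pi> J'"
    then have "miso {0..<n} J {0..<n} J'" using \<pi> miso_trans miso_sym by metis
    then show "J = J'" using uniq J(1,2) R miso_refl by blast
  qed
  have tutte_eq: "tutte {0..<n} J = tutte {0..<n} (cusp_rep k n (\<pi> J))" if "J \<in> R" for J
    using tutte_miso \<pi>(2)[OF that] by blast
  have "\<pi> ` R \<subseteq> cusp_params k n" using \<pi>(1) by blast
  then show ?thesis
    using lin_indep_reindex[OF inj tutte_eq _ sum0] tutte_cusp_rep_lin_indep[OF kn] by blast
qed

theorem proposition4p1:
  fixes k n :: nat
  assumes "k \<le> n"
  shows "card (cusp_set k n // iso_rel k n) = k * (n - k) + 1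
    \<and> (\<forall>R. R \<subseteq> cusp_set k n \<and> (\<forall>I\<in>cusp_set k n. \<exists>!J. J \<in> R \<and> miso {0..<n} I {0..<n} J)
          \<longrightarrow> (\<forall>c :: nat set set \<Rightarrow> int.
                (\<Sum>J\<in>R. of_int (c J) * tutte {0..<n} J) = 0 \<longrightarrow> (\<forall>J\<in>R. c J = 0)))"
  using bij_betw_same_card[OF bij_betw_cusp_params_classes[OF assms]] card_cusp_params[OF assms]
    representatives_tutte_lin_indep[OF assms] by auto

end
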